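(* Let $a,b\in\mathbb Q$ with $a,b>0$ such that the quaternion algebra $D=\left(\frac{a,b}{\mathbb Q}\right)$ (generators $i,j$, relations $i^2=a$, $j^2=b$, $ij=-ji$) is a division algebra, with the involution $\ast$ determined by $i^\ast=i$, $j^\ast=j$. Let $K=\mathbb Q(i)$ (on which $\ast$ is the identity), and let $N_1,N_2$ be the positive cones of the two orderings of $K\cong\mathbb Q(\sqrt a)$, with $i\in N_1$ and $-i\in N_2$. Then: (i) $b\in N_1\cap N_2$, but neither $N_1$ nor $N_2$ is of the form $M\cap K$ for a unital hermitian cone $M$ on $(D,\ast)$; (ii) with respect to the right $K$-basis $1,j$ of $D$, left regular representation $\lambda\colon D\to M_2(K)$, $A=\mathrm{diag}(1,b)$ and $X^\#=A^{-1}X^{T}A$, there exist two distinct unital hermitian cones $L_1\neq L_2$ on $(M_2(K),\#)$ with $\lambda^{-1}(L_1)=\lambda^{-1}(L_2)$.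
   Context: A unital hermitian cone on a ring $R$ with involution $\ast$ is a subset $M\subseteq\{r:r^\ast=r\}$ with $1\in M$, $M+M\subseteq M$, $aMa^\ast\subseteq M$ for all $a\in R$, and $M\cap-M=\{0\}$. The left regular representation is defined by $de_\tau=\sum_\sigma e_\sigma\lambda(d)_{\sigma\tau}$ for the basis $(e_1,e_2)=(1,j)$. *)

theory Defs
  imports Complex_Main "HOL-Algebra.Ring"
begin

definition unital_hermitian_cone :: "('r, 'm) ring_scheme \<Rightarrow> ('r \<Rightarrow> 'r) \<Rightarrow> 'r set \<Rightarrow> bool" where
  "unital_hermitian_cone R star M \<longleftrightarrow>
     M \<subseteq> {r \<in> carrier R. star r = r}
   \<and> \<one>\<^bsub>R\<^esub> \<in> M
   \<and> (\<forall>x\<in>M. \<forall>y\<in>M. x \<oplus>\<^bsub>R\<^esub> y \<in> M)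
   \<and> (\<forall>c\<in>carrier R. \<forall>x\<in>M. c \<otimes>\<^bsub>R\<^esub> x \<otimes>\<^bsub>R\<^esub> star c \<in> M)
   \<and> M \<inter> {\<ominus>\<^bsub>R\<^esub> x | x. x \<in> M} = {\<zero>\<^bsub>R\<^esub>}"

text \<open>An element (x0,x1,x2,x3) stands for x0 + x1 i + x2 j + x3 ij,
  with i^2 = a, j^2 = b, ij = -ji.\<close>

type_synonym quat = "rat \<times> rat \<times> rat \<times> rat"

definition qadd :: "quat \<Rightarrow> quat \<Rightarrow> quat" where
  "qadd x y = (case x of (x0,x1,x2,x3) \<Rightarrow> case y of (y0,y1,y2,y3) \<Rightarrow>
      (x0+y0, x1+y1, x2+y2, x3+y3))"

definition qmul :: "rat \<Rightarrow> rat \<Rightarrow> quat \<Rightarrow> quat \<Rightarrow> quat" where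
  "qmul a b x y = (case x of (x0,x1,x2,x3) \<Rightarrow> case y of (y0,y1,y2,y3) \<Rightarrow>
      (x0*y0 + a*x1*y1 + b*x2*y2 - a*b*x3*y3,
       x0*y1 + x1*y0 - b*x2*y3 + b*x3*y2,
       x0*y2 + x2*y0 + a*x1*y3 - a*x3*y1,
       x0*y3 + x3*y0 + x1*y2 - x2*y1))"

definition qone :: quat where "qone = (1,0,0,0)"
definition qzero :: quat where "qzero = (0,0,0,0)"
definition qi :: quat where "qi = (0,1,0,0)"
definition qj :: quat where "qj = (0,0,1,0)"

definition quat_ring :: "rat \<Rightarrow> rat \<Rightarrow> quat ring" where
  "quat_ring a b = \<lparr>carrier = UNIV, mult = qmul a b, one = qone, zero = qzero, add = qadd\<rparr>"

text \<open>The involution with i* = i, j* = j (hence (ij)* = ji = -ij).\<close>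
definition qstar :: "quat \<Rightarrow> quat" where
  "qstar x = (case x of (x0,x1,x2,x3) \<Rightarrow> (x0, x1, x2, -x3))"

definition is_division_algebra :: "rat \<Rightarrow> rat \<Rightarrow> bool" where
  "is_division_algebra a b \<longleftrightarrow>
     (\<forall>x. x \<noteq> qzero \<longrightarrow> (\<exists>y. qmul a b x y = qone \<and> qmul a b y x = qone))"

text \<open>Elements of K are written as pairs (y0,y1) standing for y0 + y1 i.\<close>
type_synonym kel = "rat \<times> rat"

definition kemb :: "kel \<Rightarrow> quat" where
  "kemb y = (case y of (y0,y1) \<Rightarrow> (y0, y1, 0, 0))"

definition Kset :: "quat set" where
  "Kset = range kemb"

definition ordering_cone :: "rat \<Rightarrow> rat \<Rightarrow> quat set \<Rightarrow> bool" where
  "ordering_cone a b P \<longleftrightarrow>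
     P \<subseteq> Kset
   \<and> (\<forall>x\<in>P. \<forall>y\<in>P. qadd x y \<in> P)
   \<and> (\<forall>x\<in>P. \<forall>y\<in>P. qmul a b x y \<in> P)
   \<and> P \<union> {\<ominus>\<^bsub>quat_ring a b\<^esub> x | x. x \<in> P} = Kset
   \<and> P \<inter> {\<ominus>\<^bsub>quat_ring a b\<^esub> x | x. x \<in> P} = {qzero}"

definition kadd :: "kel \<Rightarrow> kel \<Rightarrow> kel" where
  "kadd x y = (fst x + fst y, snd x + snd y)"

definition kmul :: "rat \<Rightarrow> kel \<Rightarrow> kel \<Rightarrow> kel" where
  "kmul a x y = (fst x * fst y + a * snd x * snd y, fst x * snd y + snd x * fst y)"

text \<open>(m11, m12, m21, m22)\<close>
type_synonym m2 = "kel \<times> kel \<times> kel \<times> kel"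

definition m2add :: "m2 \<Rightarrow> m2 \<Rightarrow> m2" where
  "m2add X Y = (case X of (x11,x12,x21,x22) \<Rightarrow> case Y of (y11,y12,y21,y22) \<Rightarrow>
     (kadd x11 y11, kadd x12 y12, kadd x21 y21, kadd x22 y22))"

definition m2mul :: "rat \<Rightarrow> m2 \<Rightarrow> m2 \<Rightarrow> m2" where
  "m2mul a X Y = (case X of (x11,x12,x21,x22) \<Rightarrow> case Y of (y11,y12,y21,y22) \<Rightarrow>
     (kadd (kmul a x11 y11) (kmul a x12 y21), kadd (kmul a x11 y12) (kmul a x12 y22),
      kadd (kmul a x21 y11) (kmul a x22 y21), kadd (kmul a x21 y12) (kmul a x22 y22)))"

definition m2one :: m2 where "m2one = ((1,0),(0,0),(0,0),(1,0))"
definition m2zero :: m2 where "m2zero = ((0,0),(0,0),(0,0),(0,0))"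

definition m2_ring :: "rat \<Rightarrow> m2 ring" where
  "m2_ring a = \<lparr>carrier = UNIV, mult = m2mul a, one = m2one, zero = m2zero, add = m2add\<rparr>"

definition m2transpose :: "m2 \<Rightarrow> m2" where
  "m2transpose X = (case X of (x11,x12,x21,x22) \<Rightarrow> (x11,x21,x12,x22))"

definition Amat :: "rat \<Rightarrow> m2" where "Amat b = ((1,0),(0,0),(0,0),(b,0))"
definition Ainv :: "rat \<Rightarrow> m2" where "Ainv b = ((1,0),(0,0),(0,0),(inverse b,0))"

text \<open>X^# = A^{-1} X^T A  (the involution on K is the identity).\<close>
definition msharp :: "rat \<Rightarrow> rat \<Rightarrow> m2 \<Rightarrow> m2" where
  "msharp a b X = m2mul a (m2mul a (Ainv b) (m2transpose X)) (Amat b)"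

definition lreg :: "rat \<Rightarrow> rat \<Rightarrow> quat \<Rightarrow> m2" where
  "lreg a b d = (THE X. case X of (l11,l12,l21,l22) \<Rightarrow>
       qmul a b d qone = qadd (qmul a b qone (kemb l11)) (qmul a b qj (kemb l21))
     \<and> qmul a b d qj = qadd (qmul a b qone (kemb l12)) (qmul a b qj (kemb l22)))"

end

theory Submission
  imports Defs
begin

text \<open>
  Any ordering cone $P$ of $K$ contains all positive rationals (they are sums of
  squares), in particular $b$, and it contains $e i$ for some $e \neq 0$.  If $P = M \cap K$ for a
  unital hermitian cone $M$, then conjugating by $j$ gives $j (e i) j^\ast = -b e i \in P$, while
  $b e i \in P$ as a product of elements of $P$, contradicting $P \cap -P = \{0\}$.

  Since $a$ is not a rational square, both real square roots $\pm s$ of $a$ give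
  injective embeddings $K \to \mathbb{R}$.  For each of them the $\#$-hermitian matrices $X$ whose
  real quadratic form $(u,v) A \sigma_{\pm s}(X) (u,v)^T$ is positive semidefinite form a unital
  hermitian cone $L_{\pm}$ on $(M_2(K), \#)$; the two cones differ (look at $i \cdot 1$).  For a
  hermitian quaternion $d$, switching the embedding swaps the diagonal of $\lambda(d)$, which is
  compensated by a real change of variables, so $\lambda^{-1}(L_+) = \lambda^{-1}(L_-)$.
\<close>

lemma quat_neg:
  "\<ominus>\<^bsub>quat_ring a b\<^esub> x = (case x of (x0, x1, x2, x3) \<Rightarrow> (-x0, -x1, -x2, -x3))"
  unfolding a_inv_def m_inv_def
  by (rule the_equality; cases x) (auto simp: quat_ring_def qadd_def qzero_def)

lemma qmul_assoc: "qmul a b (qmul a b x y) z = qmul a b x (qmul a b y z)"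
  by (cases x; cases y; cases z) (simp add: qmul_def algebra_simps)

text \<open>In a division algebra $a$ is not a rational square: otherwise
  $(i - c)(i + c) = i^2 - c^2 = 0$ would exhibit zero divisors.\<close>
lemma division_algebra_a_not_square:
  assumes "is_division_algebra a b"
  shows "c * c \<noteq> a"
proof
  assume sq: "c * c = a"
  define x :: quat where "x = (-c, 1, 0, 0)"
  define y :: quat where "y = (c, 1, 0, 0)"
  have zero_divisor: "qmul a b x y = qzero"
    using sq by (simp add: x_def y_def qmul_def qzero_def)
  have "x \<noteq> qzero" by (simp add: x_def qzero_def)
  then obtain z where "qmul a b z x = qone"
    using assms unfolding is_division_algebra_def by blast
  then have "qmul a b (qmul a b z x) y = y"
    by (simp add: y_def qone_def qmul_def)
  moreover have "qmul a b z (qmul a b x y) = qzero"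
    using zero_divisor by (cases z) (simp add: qmul_def qzero_def)
  ultimately show False
    using qmul_assoc[of a b z x y] by (simp add: y_def qzero_def)
qed

text \<open>The positive cone of an ordering of $K$ contains all squares, since it
  contains $y$ or $-y$ and $(-y)^2 = y^2$.\<close>
lemma ordering_cone_square:
  assumes P: "ordering_cone a b P" and y: "y \<in> Kset"
  shows "qmul a b y y \<in> P"
proof -
  have mult: "\<forall>x\<in>P. \<forall>y\<in>P. qmul a b x y \<in> P"
    and "P \<union> {\<ominus>\<^bsub>quat_ring a b\<^esub> x | x. x \<in> P} = Kset"
    using P by (auto simp: ordering_cone_def)
  then consider "y \<in> P" | x where "x \<in> P" "y = \<ominus>\<^bsub>quat_ring a b\<^esub> x"
    using y by blast
  then show ?thesis
  proof cases
    case (2 x)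
    then have "qmul a b y y = qmul a b x x"
      by (cases x) (simp add: quat_neg qmul_def)
    then show ?thesis using mult \<open>x \<in> P\<close> by simp
  qed (use mult in blast)
qed

lemma ordering_cone_multiple_of_square:
  assumes P: "ordering_cone a b P" and n: "n > 0"
  shows "(of_nat n * (r * r), 0, 0, 0) \<in> P"
proof -
  have "qmul a b (r, 0, 0, 0) (r, 0, 0, 0) \<in> P"
    using ordering_cone_square[OF P] by (simp add: Kset_def kemb_def image_iff)
  then have square: "(r * r, 0, 0, 0) \<in> P"
    by (simp add: qmul_def)
  show ?thesis
    using n
  proof (induction n rule: nat_induct_non_zero)
    case (Suc n)
    have "qadd (of_nat n * (r * r), 0, 0, 0) (r * r, 0, 0, 0) \<in> P"
      using P Suc.IH square by (auto simp: ordering_cone_def)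
    then show ?case by (simp add: qadd_def algebra_simps)
  qed (use square in simp)
qed

text \<open>Every positive rational $p/q = pq \cdot (1/q)^2$ lies in every ordering cone.\<close>
lemma ordering_cone_pos:
  assumes P: "ordering_cone a b P" and c: "c > 0"
  shows "(c, 0, 0, 0) \<in> P"
proof -
  obtain p q where pq: "quotient_of c = (p, q)"
    by (cases "quotient_of c") auto
  have c_eq: "c = of_int p / of_int q" and q: "q > 0"
    using pq quotient_of_div quotient_of_denom_pos by blast+
  have p: "p > 0"
    using c c_eq q by (simp add: zero_less_divide_iff)
  have "c = of_nat (nat (p * q)) * ((1 / of_int q) * (1 / of_int q))"
    using p q by (simp add: c_eq field_simps)
  moreover have "nat (p * q) > 0"
    using p q by simp
  ultimately show ?thesis
    using ordering_cone_multiple_of_square[OF P] by metis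
qed

lemma ordering_cone_contains_pm_i:
  assumes P: "ordering_cone a b P"
  obtains e where "e \<noteq> 0" "(0, e, 0, 0) \<in> P"
proof -
  have "qi \<in> Kset"
    by (simp add: qi_def Kset_def kemb_def image_iff)
  then have "qi \<in> P \<or> (\<exists>x\<in>P. qi = \<ominus>\<^bsub>quat_ring a b\<^esub> x)"
    using P unfolding ordering_cone_def by blast
  then have "(0, 1, 0, 0) \<in> P \<or> (0, -1, 0, 0) \<in> P"
    by (auto simp: qi_def quat_neg split: prod.splits)
  then show ?thesis
    using that[of 1] that[of "-1"] by auto
qed

text \<open>If $e i \in P \subseteq M$, then $j (e i) j^\ast = -b e i \in M \cap K = P$,
  while $b \in P$ gives $b e i \in P$; so $b e i \in P \cap -P = \{0\}$, contradicting $b e \neq 0$.\<close>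
lemma ordering_cone_not_restriction:
  assumes b: "b > 0" and P: "ordering_cone a b P"
  shows "\<not> (\<exists>M. unital_hermitian_cone (quat_ring a b) qstar M \<and> P = M \<inter> Kset)"
proof
  assume "\<exists>M. unital_hermitian_cone (quat_ring a b) qstar M \<and> P = M \<inter> Kset"
  then obtain M where M: "unital_hermitian_cone (quat_ring a b) qstar M"
    and P_eq: "P = M \<inter> Kset" by blast
  obtain e where e: "e \<noteq> 0" "(0, e, 0, 0) \<in> P"
    using ordering_cone_contains_pm_i[OF P] .
  have congruence: "qmul a b (qmul a b c x) (qstar c) \<in> M" if "x \<in> M" for c x
    using M that unfolding unital_hermitian_cone_def by (cases c) (simp add: quat_ring_def)
  have "qmul a b (qmul a b qj (0, e, 0, 0)) (qstar qj) \<in> M"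
    using congruence e P_eq by blast
  moreover have "qmul a b (qmul a b qj (0, e, 0, 0)) (qstar qj) = (0, - (b * e), 0, 0)"
    by (simp add: qmul_def qj_def qstar_def)
  moreover have "(0, c, 0, 0) \<in> Kset" for c
    by (simp add: Kset_def kemb_def image_iff)
  ultimately have neg: "(0, - (b * e), 0, 0) \<in> P"
    using P_eq by simp
  have "qmul a b (b, 0, 0, 0) (0, e, 0, 0) \<in> P"
    using P ordering_cone_pos[OF P b] e by (auto simp: ordering_cone_def)
  then have pos: "(0, b * e, 0, 0) \<in> P"
    by (simp add: qmul_def)
  have "(0, - (b * e), 0, 0) = \<ominus>\<^bsub>quat_ring a b\<^esub> (0, b * e, 0, 0)"
    by (simp add: quat_neg)
  then have "(0, - (b * e), 0, 0) \<in> P \<inter> {\<ominus>\<^bsub>quat_ring a b\<^esub> x | x. x \<in> P}"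
    using neg pos by blast
  then have "(0, - (b * e), 0, 0) = qzero"
    using P unfolding ordering_cone_def by blast
  then show False
    using b e by (simp add: qzero_def)
qed

lemma m2_neg:
  "\<ominus>\<^bsub>m2_ring a\<^esub> X = (case X of ((p1, q1), (p2, q2), (p3, q3), (p4, q4)) \<Rightarrow>
     ((-p1, -q1), (-p2, -q2), (-p3, -q3), (-p4, -q4)))"
  unfolding a_inv_def m_inv_def
  by (rule the_equality; cases X)
     (auto simp: m2_ring_def m2add_def m2zero_def kadd_def split: prod.splits)

lemma msharp_eq:
  assumes "b \<noteq> 0"
  shows "msharp a b (x11, x12, x21, x22) =
    (x11, (b * fst x21, b * snd x21), (fst x12 / b, snd x12 / b), x22)"
  using assms by (cases x22)
    (simp add: msharp_def m2mul_def Ainv_def Amat_def m2transpose_def kadd_def kmul_def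
      divide_inverse split: prod.splits)

text \<open>$X$ is $\#$-hermitian iff $x_{12} = b\, x_{21}$, i.e.\ iff $A X$ is symmetric.\<close>
lemma msharp_fixed_iff:
  assumes "b \<noteq> 0"
  shows "msharp a b (x11, x12, x21, x22) = (x11, x12, x21, x22) \<longleftrightarrow>
    x12 = (b * fst x21, b * snd x21)"
  using assms by (cases x12; cases x21) (auto simp: msharp_eq field_simps)

lemma msharp_congruence_fixed:
  assumes "b \<noteq> 0" and "msharp a b X = X"
  shows "msharp a b (m2mul a (m2mul a C X) (msharp a b C)) = m2mul a (m2mul a C X) (msharp a b C)"
proof -
  obtain c11 c12 c21 c22 where C: "C = (c11, c12, c21, c22)" by (cases C) auto
  obtain x11 x12 x21 x22 where X: "X = (x11, x12, x21, x22)" by (cases X) auto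
  have "x12 = (b * fst x21, b * snd x21)"
    using assms msharp_fixed_iff X by blast
  then show ?thesis
    using assms(1) unfolding C X
    by (simp add: msharp_eq m2mul_def kmul_def kadd_def field_simps split: prod.splits)
qed

definition keval :: "real \<Rightarrow> kel \<Rightarrow> real" where
  "keval s y = of_rat (fst y) + of_rat (snd y) * s"

text \<open>The real quadratic form $(u,v) \mapsto (u,v)\, A\, \sigma_s(X)\, (u,v)^T$ attached to $X$,
  where $\sigma_s$ applies \<open>keval s\<close> entrywise.\<close>
definition hform :: "real \<Rightarrow> rat \<Rightarrow> m2 \<Rightarrow> real \<Rightarrow> real \<Rightarrow> real" where
  "hform s b X u v =
     keval s (fst X) * u\<^sup>2
   + (keval s (fst (snd X)) + of_rat b * keval s (fst (snd (snd X)))) * u * v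
   + of_rat b * keval s (snd (snd (snd X))) * v\<^sup>2"

definition psd_cone :: "rat \<Rightarrow> rat \<Rightarrow> real \<Rightarrow> m2 set" where
  "psd_cone a b s = {X. msharp a b X = X \<and> (\<forall>u v. hform s b X u v \<ge> 0)}"

lemma keval_kadd [simp]: "keval s (kadd x y) = keval s x + keval s y"
  by (simp add: keval_def kadd_def of_rat_add algebra_simps)

lemma keval_kmul [simp]: "s * s = of_rat a \<Longrightarrow> keval s (kmul a x y) = keval s x * keval s y"
  by (simp add: keval_def kmul_def of_rat_add of_rat_mult algebra_simps)

lemma keval_scale [simp]: "keval s (c * fst y, c * snd y) = of_rat c * keval s y"
  by (simp add: keval_def of_rat_mult algebra_simps)

lemma keval_divide [simp]: "keval s (fst y / c, snd y / c) = keval s y / of_rat c"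
  by (simp add: keval_def of_rat_divide add_divide_distrib)

text \<open>Since $a$ is not a rational square, $s = \pm\sqrt a$ is irrational and the
  embedding has trivial kernel.\<close>
lemma keval_eq_0_iff:
  assumes "s * s = of_rat a" and "is_division_algebra a b"
  shows "keval s y = 0 \<longleftrightarrow> y = (0, 0)"
proof
  assume y: "keval s y = 0"
  show "y = (0, 0)"
  proof (cases "snd y = 0")
    case True
    then show ?thesis using y by (simp add: keval_def prod_eq_iff)
  next
    case False
    then have "s = of_rat (- fst y / snd y)"
      using y by (simp add: keval_def of_rat_divide of_rat_minus field_simps)
    then have "of_rat ((- fst y / snd y) * (- fst y / snd y)) = (of_rat a :: real)"
      using assms(1) by (metis of_rat_mult)
    then show ?thesis
      using division_algebra_a_not_square[OF assms(2)] of_rat_eq_iff by blast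
  qed
qed (simp add: keval_def)

lemma hform_add: "hform s b (m2add X Y) u v = hform s b X u v + hform s b Y u v"
  by (cases X; cases Y) (simp add: m2add_def hform_def algebra_simps)

lemma hform_neg: "hform s b (\<ominus>\<^bsub>m2_ring a\<^esub> X) u v = - hform s b X u v"
  by (cases X) (simp add: m2_neg hform_def keval_def of_rat_minus algebra_simps split: prod.splits)

text \<open>Transformation rule: the form of $C X C^\#$ is the form of $X$ evaluated at a
  linear change of variables, so congruence preserves positive semidefiniteness.\<close>
lemma hform_congruence:
  assumes "b \<noteq> 0" and "s * s = of_rat a"
  shows "hform s b (m2mul a (m2mul a (c11, c12, c21, c22) X) (msharp a b (c11, c12, c21, c22))) u v
    = hform s b X (keval s c11 * u + of_rat b * keval s c21 * v)
        ((keval s c12 * u + of_rat b * keval s c22 * v) / of_rat b)"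
  using assms by (cases X)
    (simp add: msharp_eq m2mul_def hform_def, simp add: field_simps power2_eq_square, algebra)

lemma psd_cone_one:
  assumes "b > 0"
  shows "m2one \<in> psd_cone a b s"
  using assms by (simp add: psd_cone_def m2one_def msharp_eq hform_def keval_def)

lemma psd_cone_add:
  assumes "X \<in> psd_cone a b s" and "Y \<in> psd_cone a b s" and "b \<noteq> 0"
  shows "m2add X Y \<in> psd_cone a b s"
proof -
  have "msharp a b (m2add X Y) = m2add X Y"
    using assms msharp_fixed_iff[OF assms(3)]
    by (cases X; cases Y) (auto simp: psd_cone_def m2add_def kadd_def algebra_simps)
  then show ?thesis
    using assms by (simp add: psd_cone_def hform_add add_nonneg_nonneg)
qed

lemma psd_cone_congruence:
  assumes "X \<in> psd_cone a b s" and "b \<noteq> 0" and "s * s = of_rat a"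
  shows "m2mul a (m2mul a C X) (msharp a b C) \<in> psd_cone a b s"
proof -
  obtain c11 c12 c21 c22 where C: "C = (c11, c12, c21, c22)" by (cases C) auto
  show ?thesis
    using assms msharp_congruence_fixed[OF assms(2)] hform_congruence[OF assms(2,3)]
    unfolding C by (simp add: psd_cone_def)
qed

text \<open>If $X$ and $-X$ both lie in the cone, the form of $X$ vanishes identically, so all
  entries of $X$ vanish under the injective embedding: $X = 0$.\<close>
lemma psd_cone_antisymmetric:
  assumes "X \<in> psd_cone a b s" and "\<ominus>\<^bsub>m2_ring a\<^esub> X \<in> psd_cone a b s"
    and "b > 0" and "s * s = of_rat a" and "is_division_algebra a b"
  shows "X = m2zero"
proof -
  obtain x11 x12 x21 x22 where X: "X = (x11, x12, x21, x22)" by (cases X) auto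
  have zero: "hform s b X u v = 0" for u v
  proof -
    have "0 \<le> hform s b X u v" and "0 \<le> hform s b (\<ominus>\<^bsub>m2_ring a\<^esub> X) u v"
      using assms(1,2) by (simp_all add: psd_cone_def)
    then show ?thesis
      by (simp add: hform_neg)
  qed
  have x12: "x12 = (b * fst x21, b * snd x21)"
    using assms(1,3) msharp_fixed_iff X by (simp add: psd_cone_def)
  have rb: "(of_rat b :: real) > 0" using assms(3) by simp
  have "keval s x11 = 0" using zero[of 1 0] X by (simp add: hform_def)
  moreover have "keval s x22 = 0" using zero[of 0 1] X rb by (simp add: hform_def)
  moreover have "keval s x21 = 0"
    using zero[of 1 1] X x12 rb calculation by (simp add: hform_def)
  moreover have "keval s x12 = 0"
    using x12 calculation by simp
  ultimately show ?thesis
    using keval_eq_0_iff[OF assms(4,5)] X by (simp add: m2zero_def)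
qed

lemma psd_cone_pointed:
  assumes "b > 0" and "s * s = of_rat a" and "is_division_algebra a b"
  shows "psd_cone a b s \<inter> {\<ominus>\<^bsub>m2_ring a\<^esub> X | X. X \<in> psd_cone a b s} = {m2zero}"
proof -
  have zero_in: "m2zero \<in> psd_cone a b s"
    using assms(1) by (simp add: psd_cone_def m2zero_def msharp_eq hform_def keval_def)
  have neg_zero: "\<ominus>\<^bsub>m2_ring a\<^esub> m2zero = m2zero"
    by (simp add: m2_neg m2zero_def)
  show ?thesis
  proof (intro equalityI subsetI)
    fix Y assume "Y \<in> psd_cone a b s \<inter> {\<ominus>\<^bsub>m2_ring a\<^esub> X | X. X \<in> psd_cone a b s}"
    then have "Y \<in> psd_cone a b s" by blast
    moreover obtain X where X: "X \<in> psd_cone a b s" "Y = \<ominus>\<^bsub>m2_ring a\<^esub> X"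
      using \<open>Y \<in> _ \<inter> _\<close> by blast
    ultimately have "X = m2zero"
      using psd_cone_antisymmetric[OF _ _ assms] by blast
    then show "Y \<in> {m2zero}"
      using X neg_zero by simp
  next
    fix Y assume "Y \<in> {m2zero}"
    moreover have "m2zero \<in> {\<ominus>\<^bsub>m2_ring a\<^esub> X | X. X \<in> psd_cone a b s}"
      using zero_in neg_zero[symmetric] by blast
    ultimately show "Y \<in> psd_cone a b s \<inter> {\<ominus>\<^bsub>m2_ring a\<^esub> X | X. X \<in> psd_cone a b s}"
      using zero_in by simp
  qed
qed

lemma psd_cone_hermitian_cone:
  assumes "b > 0" and "s * s = of_rat a" and "is_division_algebra a b"
  shows "unital_hermitian_cone (m2_ring a) (msharp a b) (psd_cone a b s)"
proof -
  have b: "b \<noteq> 0" using assms(1) by simp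
  have "psd_cone a b s \<subseteq> {X \<in> carrier (m2_ring a). msharp a b X = X}"
    by (auto simp: psd_cone_def m2_ring_def)
  moreover have "\<forall>X\<in>psd_cone a b s. \<forall>Y\<in>psd_cone a b s. X \<oplus>\<^bsub>m2_ring a\<^esub> Y \<in> psd_cone a b s"
    using psd_cone_add[OF _ _ b] by (simp add: m2_ring_def)
  moreover have "\<forall>C\<in>carrier (m2_ring a). \<forall>X\<in>psd_cone a b s.
      C \<otimes>\<^bsub>m2_ring a\<^esub> X \<otimes>\<^bsub>m2_ring a\<^esub> msharp a b C \<in> psd_cone a b s"
    using psd_cone_congruence[OF _ b assms(2)] by (simp add: m2_ring_def)
  ultimately show ?thesis
    unfolding unital_hermitian_cone_def
    using psd_cone_one[OF assms(1)] psd_cone_pointed[OF assms] by (simp add: m2_ring_def)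
qed

lemma lreg_eq:
  assumes "b \<noteq> 0"
  shows "lreg a b (x0, x1, x2, x3) = ((x0, x1), (b * x2, b * x3), (x2, - x3), (x0, - x1))"
  unfolding lreg_def
  by (rule the_equality)
     (use assms in \<open>auto simp: qmul_def qadd_def qone_def qj_def kemb_def split: prod.splits\<close>)

text \<open>The cones for the two embeddings $\pm s$ differ: $i \cdot 1$ is positive for one
  embedding and negative for the other.\<close>
lemma psd_cones_distinct:
  assumes "s > 0" and "b > 0"
  shows "psd_cone a b s \<noteq> psd_cone a b (- s)"
proof -
  define X :: m2 where "X = ((0, 1), (0, 0), (0, 0), (0, 1))"
  have "msharp a b X = X"
    using assms(2) by (simp add: X_def msharp_eq)
  then have "X \<in> psd_cone a b s"
    using assms by (simp add: psd_cone_def X_def hform_def keval_def)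
  moreover have "hform (- s) b X 1 0 < 0"
    using assms(1) by (simp add: X_def hform_def keval_def)
  then have "X \<notin> psd_cone a b (- s)"
    by (auto simp: psd_cone_def not_le)
  ultimately show ?thesis by blast
qed

text \<open>For hermitian $d = x_0 + x_1 i + x_2 j$ the matrix $\lambda(d)$ has diagonal
  $(x_0 + x_1 i, x_0 - x_1 i)$, so replacing $s$ by $-s$ swaps the diagonal; this is undone by the
  substitution $(u, v) \mapsto (\sqrt b\, v, u / \sqrt b)$.\<close>
lemma hform_lreg_conjugate:
  assumes "b > 0"
  shows "hform (- t) b (lreg a b (x0, x1, x2, 0)) u v
       = hform t b (lreg a b (x0, x1, x2, 0)) (sqrt (of_rat b) * v) (u / sqrt (of_rat b))"
proof -
  have rb: "(of_rat b :: real) > 0" using assms by simp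
  have sq: "sqrt (of_rat b) * sqrt (of_rat b) = (of_rat b :: real)" using rb by simp
  have sp: "sqrt (of_rat b :: real) > 0" using rb by simp
  show ?thesis using assms sp sq
    by (simp add: lreg_eq hform_def keval_def of_rat_mult of_rat_minus field_simps power2_eq_square)
       algebra
qed

lemma lreg_psd_cone_conjugate:
  assumes "lreg a b d \<in> psd_cone a b t" and "b > 0"
  shows "lreg a b d \<in> psd_cone a b (- t)"
proof -
  obtain x0 x1 x2 x3 where d: "d = (x0, x1, x2, x3)" by (cases d) auto
  have fixed: "msharp a b (lreg a b d) = lreg a b d"
    using assms(1) by (simp add: psd_cone_def)
  then have "x3 = 0"
    using assms(2) by (simp add: d lreg_eq msharp_eq)
  then have "hform (- t) b (lreg a b d) u v \<ge> 0" for u v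
    using assms hform_lreg_conjugate[OF assms(2)] by (simp add: d psd_cone_def)
  then show ?thesis
    using fixed by (simp add: psd_cone_def)
qed

theorem mainTheorem16:
  fixes a b :: rat
  assumes "a > 0" and "b > 0"
    and "is_division_algebra a b"
  shows "(\<forall>N1 N2. ordering_cone a b N1 \<and> ordering_cone a b N2 \<and> qi \<in> N1
              \<and> \<ominus>\<^bsub>quat_ring a b\<^esub> qi \<in> N2 \<longrightarrow>
             (b, 0, 0, 0) \<in> N1 \<inter> N2
           \<and> \<not> (\<exists>M. unital_hermitian_cone (quat_ring a b) qstar M \<and> N1 = M \<inter> Kset)
           \<and> \<not> (\<exists>M. unital_hermitian_cone (quat_ring a b) qstar M \<and> N2 = M \<inter> Kset))
       \<and> (\<exists>L1 L2. unital_hermitian_cone (m2_ring a) (msharp a b) L1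
              \<and> unital_hermitian_cone (m2_ring a) (msharp a b) L2
              \<and> L1 \<noteq> L2
              \<and> {d. lreg a b d \<in> L1} = {d. lreg a b d \<in> L2})"
proof (intro conjI allI impI)
  fix N1 N2
  assume "ordering_cone a b N1 \<and> ordering_cone a b N2 \<and> qi \<in> N1
    \<and> \<ominus>\<^bsub>quat_ring a b\<^esub> qi \<in> N2"
  then have N1: "ordering_cone a b N1" and N2: "ordering_cone a b N2" by simp_all
  show "(b, 0, 0, 0) \<in> N1 \<inter> N2"
    using ordering_cone_pos[OF N1 assms(2)] ordering_cone_pos[OF N2 assms(2)] by blast
  show "\<not> (\<exists>M. unital_hermitian_cone (quat_ring a b) qstar M \<and> N1 = M \<inter> Kset)"
    using ordering_cone_not_restriction[OF assms(2) N1] .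
  show "\<not> (\<exists>M. unital_hermitian_cone (quat_ring a b) qstar M \<and> N2 = M \<inter> Kset)"
    using ordering_cone_not_restriction[OF assms(2) N2] .
next
  define s where "s = sqrt (of_rat a :: real)"
  have s_pos: "s > 0" and s_sq: "s * s = of_rat a" and neg_s_sq: "(- s) * (- s) = of_rat a"
    using assms(1) by (simp_all add: s_def)
  have "{d. lreg a b d \<in> psd_cone a b s} = {d. lreg a b d \<in> psd_cone a b (- s)}"
    using lreg_psd_cone_conjugate[OF _ assms(2), of a _ s]
      lreg_psd_cone_conjugate[OF _ assms(2), of a _ "- s"] by fastforce
  then show "\<exists>L1 L2. unital_hermitian_cone (m2_ring a) (msharp a b) L1
              \<and> unital_hermitian_cone (m2_ring a) (msharp a b) L2
              \<and> L1 \<noteq> L2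
              \<and> {d. lreg a b d \<in> L1} = {d. lreg a b d \<in> L2}"
    using psd_cone_hermitian_cone[OF assms(2) s_sq assms(3)]
      psd_cone_hermitian_cone[OF assms(2) neg_s_sq assms(3)]
      psd_cones_distinct[OF s_pos assms(2)] by (intro exI conjI)
qed

end
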